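(* Let $\mathcal{H}$ be a $k$-uniform hypergraph with vertex degrees $d_i$. Then \[ \rho(\mathcal{Q}(\mathcal{H}))\leq\max_{e\in E(\mathcal{H})}\max_{\{i,j\}\subseteq e}(d_{i}+d_{j}). \]
   Context: A $k$-uniform hypergraph $\mathcal{H}$ on vertex set $[n]$ has edges that are $k$-element subsets of $[n]$; $d_i$ is the number of edges containing vertex $i$. The adjacency tensor $\mathcal{A}(\mathcal{H})$ has entries $\mathcal{A}_{i_1\cdots i_k}=\frac{1}{(k-1)!}$ if $\{i_1,\dots,i_k\}\in E(\mathcal{H})$ and $0$ otherwise; $\mathcal{D}(\mathcal{H})$ is the diagonal tensor with $\mathcal{D}_{i\cdots i}=d_i$; $\mathcal{Q}(\mathcal{H})=\mathcal{D}(\mathcal{H})+\mathcal{A}(\mathcal{H})$ is the signless Laplacian tensor. For a tensor $\mathcal{T}$ and $x\in\mathbb{C}^n$, $(\mathcal{T}x)_i=\sum_{i_2,\dots,i_k}\mathcal{T}_{ii_2\cdots i_k}x_{i_2}\cdots x_{i_k}$; $\lambda$ is an eigenvalue if $\mathcal{T}x=\lambda x^{[k-1]}$ for some nonzero $x$, where $x^{[k-1]}=(x_1^{k-1},\dots,x_n^{k-1})^T$; $\rho(\mathcal{T})$ is the maximum modulus of eigenvalues. *)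

theory Defs
  imports Complex_Main
begin

text \<open>Vertex set is {0..<n} (i.e. [n] relabelled). Edges are k-element subsets.\<close>

definition uniform_hypergraph :: "nat \<Rightarrow> nat \<Rightarrow> nat set set \<Rightarrow> bool" where
  "uniform_hypergraph n k E \<longleftrightarrow> (\<forall>e\<in>E. e \<subseteq> {..<n} \<and> card e = k)"

definition degree :: "nat set set \<Rightarrow> nat \<Rightarrow> nat" where
  "degree E i = card {e\<in>E. i \<in> e}"

text \<open>Order-k tensors of dimension n: functions on index lists (of length k, entries < n).\<close>

definition adj_tensor :: "nat \<Rightarrow> nat set set \<Rightarrow> nat list \<Rightarrow> real" where
  "adj_tensor k E is = (if set is \<in> E then 1 / fact (k - 1) else 0)"

definition deg_tensor :: "nat set set \<Rightarrow> nat list \<Rightarrow> real" where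
  "deg_tensor E is = (if is \<noteq> [] \<and> (\<forall>j\<in>set is. j = hd is) then real (degree E (hd is)) else 0)"

definition signless_laplacian_tensor :: "nat \<Rightarrow> nat set set \<Rightarrow> nat list \<Rightarrow> real" where
  "signless_laplacian_tensor k E is = deg_tensor E is + adj_tensor k E is"

definition tensor_apply :: "nat \<Rightarrow> nat \<Rightarrow> (nat list \<Rightarrow> real) \<Rightarrow> (nat \<Rightarrow> complex) \<Rightarrow> nat \<Rightarrow> complex" where
  "tensor_apply n k T x i =
     (\<Sum>is \<in> {is. length is = k - 1 \<and> set is \<subseteq> {..<n}}.
        complex_of_real (T (i # is)) * prod_list (map x is))"

definition tensor_eigenvalue :: "nat \<Rightarrow> nat \<Rightarrow> (nat list \<Rightarrow> real) \<Rightarrow> complex \<Rightarrow> bool" where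
  "tensor_eigenvalue n k T lam \<longleftrightarrow>
     (\<exists>x. (\<exists>i<n. x i \<noteq> 0) \<and> (\<forall>i<n. tensor_apply n k T x i = lam * x i ^ (k - 1)))"

definition tensor_spectral_radius :: "nat \<Rightarrow> nat \<Rightarrow> (nat list \<Rightarrow> real) \<Rightarrow> real" where
  "tensor_spectral_radius n k T = Sup {cmod lam | lam. tensor_eigenvalue n k T lam}"

end

theory Submission
  imports Defs "HOL-Combinatorics.Multiset_Permutations" "Jordan_Normal_Form.Spectral_Radius"
begin

text \<open>
  Let \<open>x\<close> be an eigenvector for \<open>\<lambda>\<close>, let \<open>p\<close> maximise \<open>|x\<^sub>p|\<close>, and let \<open>q\<close> maximise \<open>|x\<^sub>q|\<close>
  among the neighbours of \<open>p\<close>. Since \<open>Q = D + A\<close> and the row of \<open>A\<close> at a vertex \<open>i\<close> has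
  total weight \<open>d\<^sub>i\<close> and only involves neighbours of \<open>i\<close>, the eigen-equations at \<open>p\<close> and \<open>q\<close>
  give \<open>|\<lambda> - d\<^sub>p| |x\<^sub>p|^(k-1) \<le> d\<^sub>p |x\<^sub>q|^(k-1)\<close> and \<open>|\<lambda> - d\<^sub>q| |x\<^sub>q|^(k-1) \<le> d\<^sub>q |x\<^sub>p|^(k-1)\<close>.
  Multiplying, \<open>|\<lambda> - d\<^sub>p| |\<lambda> - d\<^sub>q| \<le> d\<^sub>p d\<^sub>q\<close>, which forces \<open>|\<lambda>| \<le> d\<^sub>p + d\<^sub>q\<close>
  (a Brauer-type argument). The supremum is over a nonempty set: for \<open>k = 2\<close> the tensor is a
  matrix, and for \<open>k \<ge> 3\<close> every unit vector is an eigenvector of \<open>Q\<close>.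
\<close>

hide_const (open) Polynomial.degree

definition adjacent :: "nat set set \<Rightarrow> nat \<Rightarrow> nat \<Rightarrow> bool" where
  "adjacent E i j \<longleftrightarrow> i \<noteq> j \<and> (\<exists>e\<in>E. i \<in> e \<and> j \<in> e)"

lemma uniform_hypergraph_edge_subset:
  "uniform_hypergraph n k E \<Longrightarrow> e \<in> E \<Longrightarrow> e \<subseteq> {..<n}"
  unfolding uniform_hypergraph_def by auto

lemma uniform_hypergraph_card_edge:
  "uniform_hypergraph n k E \<Longrightarrow> e \<in> E \<Longrightarrow> card e = k"
  unfolding uniform_hypergraph_def by auto

lemma uniform_hypergraph_finite: "uniform_hypergraph n k E \<Longrightarrow> finite E"
  by (rule finite_subset[of E "Pow {..<n}"]) (auto dest: uniform_hypergraph_edge_subset)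

lemma adjacent_less: "uniform_hypergraph n k E \<Longrightarrow> adjacent E i j \<Longrightarrow> j < n"
  unfolding adjacent_def by (auto dest: uniform_hypergraph_edge_subset)

lemma adjacent_commute: "adjacent E i j \<longleftrightarrow> adjacent E j i"
  unfolding adjacent_def by blast

lemma ex_other_elem:
  assumes "2 \<le> card e" "p \<in> e"
  shows "\<exists>q\<in>e. q \<noteq> p"
proof -
  have "finite e" using assms(1) by (auto intro: card_ge_0_finite)
  then obtain a b where "a \<in> e" "b \<in> e" "a \<noteq> b"
    using assms(1) card_le_Suc0_iff_eq[of e] by auto
  then show ?thesis by metis
qed

lemma uniform_hypergraph_edge_ex_adjacent:
  assumes "uniform_hypergraph n k E" "k \<ge> 2" "e \<in> E" "i \<in> e"
  shows "\<exists>j\<in>e. adjacent E i j"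
proof -
  obtain j where "j \<in> e" "j \<noteq> i"
    using ex_other_elem[of e i] assms uniform_hypergraph_card_edge[OF assms(1,3)] by auto
  then show ?thesis using assms(3,4) unfolding adjacent_def by auto
qed

lemma uniform_hypergraph_ex_adjacent:
  assumes "uniform_hypergraph n k E" "k \<ge> 2" "E \<noteq> {}"
  obtains i j where "adjacent E i j"
proof -
  obtain e where e: "e \<in> E" using assms(3) by blast
  then have "e \<noteq> {}" using uniform_hypergraph_card_edge[OF assms(1) e] assms(2) by auto
  then obtain i where "i \<in> e" by blast
  then show thesis using uniform_hypergraph_edge_ex_adjacent[OF assms(1,2) e] that by blast
qed

lemma degree_eq_0_if_no_adjacent:
  assumes "uniform_hypergraph n k E" "k \<ge> 2" "\<And>j. \<not> adjacent E i j"
  shows "degree E i = 0"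
proof -
  have "{e\<in>E. i \<in> e} = {}"
    using uniform_hypergraph_edge_ex_adjacent[OF assms(1,2)] assms(3) by blast
  then show ?thesis unfolding Defs.degree_def by (metis card.empty)
qed

lemma finite_lists_length_subset: "finite {ys. length ys = m \<and> set ys \<subseteq> A}" if "finite A"
  using finite_lists_length_eq[OF that, of m] by (simp add: conj_commute)

lemma finite_obtains_max_point:
  fixes f :: "'a \<Rightarrow> 'b :: linorder"
  assumes "finite A" "A \<noteq> {}"
  obtains a where "a \<in> A" "\<And>b. b \<in> A \<Longrightarrow> f b \<le> f a"
proof -
  have "Max (f ` A) \<in> f ` A" using assms by (intro Max_in) auto
  then obtain a where "a \<in> A" "f a = Max (f ` A)" by auto
  then show thesis using that assms by (metis Max_ge finite_imageI imageI)
qed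

lemma tensor_apply_add:
  "tensor_apply n k (\<lambda>is. S is + T is) x i = tensor_apply n k S x i + tensor_apply n k T x i"
  unfolding tensor_apply_def by (simp add: distrib_right sum.distrib)

lemma tensor_apply_deg_tensor:
  assumes "i < n"
  shows "tensor_apply n k (deg_tensor E) x i = of_nat (degree E i) * x i ^ (k - 1)"
proof -
  let ?S = "{ys. length ys = k - 1 \<and> set ys \<subseteq> {..<n}}"
  let ?r = "replicate (k - 1) i"
  have "complex_of_real (deg_tensor E (i # ys)) * prod_list (map x ys)
      = (if ys = ?r then of_nat (degree E i) * x i ^ (k - 1) else 0)" if "ys \<in> ?S" for ys
  proof -
    have "length ys = k - 1" using that by simp
    then have "(\<forall>j\<in>set ys. j = i) \<longleftrightarrow> ys = ?r"
      by (metis in_set_replicate replicate_length_same)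
    then show ?thesis unfolding deg_tensor_def by (auto simp: prod_list_replicate)
  qed
  then have "tensor_apply n k (deg_tensor E) x i
      = (\<Sum>ys\<in>?S. if ys = ?r then of_nat (degree E i) * x i ^ (k - 1) else 0)"
    unfolding tensor_apply_def by (rule sum.cong[OF refl])
  also have "\<dots> = of_nat (degree E i) * x i ^ (k - 1)"
    using assms finite_lists_length_subset[of "{..<n}" "k - 1"]
    by (simp add: sum.delta set_replicate_conv_if)
  finally show ?thesis .
qed

lemma tensor_apply_signless_laplacian:
  "i < n \<Longrightarrow> tensor_apply n k (signless_laplacian_tensor k E) x i
     = of_nat (degree E i) * x i ^ (k - 1) + tensor_apply n k (adj_tensor k E) x i"
  unfolding signless_laplacian_tensor_def tensor_apply_add tensor_apply_deg_tensor ..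

lemma distinct_if_edge:
  assumes "uniform_hypergraph n k E" "set (i # ys) \<in> E" "length ys = k - 1" "k \<ge> 1"
  shows "distinct (i # ys)"
proof (rule card_distinct)
  have "card (set (i # ys)) = k" using uniform_hypergraph_card_edge[OF assms(1,2)] .
  then show "card (set (i # ys)) = length (i # ys)" using assms(3,4) by (simp only: length_Cons)
qed

text \<open>Each edge through \<open>i\<close> is listed once per ordering of its other \<open>k - 1\<close> vertices.\<close>

lemma card_edge_lists_le:
  assumes U: "uniform_hypergraph n k E" and k: "k \<ge> 1"
  shows "card {ys. (length ys = k - 1 \<and> set ys \<subseteq> {..<n}) \<and> set (i # ys) \<in> E}
         \<le> degree E i * fact (k - 1)"
proof -
  let ?I = "{e\<in>E. i \<in> e}"
  have finI: "finite ?I" using uniform_hypergraph_finite[OF U] by simp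
  have "{ys. (length ys = k - 1 \<and> set ys \<subseteq> {..<n}) \<and> set (i # ys) \<in> E}
      \<subseteq> (\<Union>e\<in>?I. permutations_of_set (e - {i}))"
  proof
    fix ys assume ys: "ys \<in> {ys. (length ys = k - 1 \<and> set ys \<subseteq> {..<n}) \<and> set (i # ys) \<in> E}"
    then have "distinct (i # ys)" by (intro distinct_if_edge[OF U _ _ k]) simp_all
    then have "ys \<in> permutations_of_set (set (i # ys) - {i})"
      unfolding permutations_of_set_def by auto
    then show "ys \<in> (\<Union>e\<in>?I. permutations_of_set (e - {i}))" using ys by auto
  qed
  then have "card {ys. (length ys = k - 1 \<and> set ys \<subseteq> {..<n}) \<and> set (i # ys) \<in> E}
      \<le> card (\<Union>e\<in>?I. permutations_of_set (e - {i}))"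
    by (rule card_mono[rotated]) (use finI in auto)
  also have "\<dots> \<le> (\<Sum>e\<in>?I. card (permutations_of_set (e - {i})))"
    using finI by (rule card_UN_le)
  also have "\<dots> = (\<Sum>e\<in>?I. fact (k - 1))"
  proof (rule sum.cong[OF refl])
    fix e assume e: "e \<in> ?I"
    then have "card e = k" "finite e"
      using uniform_hypergraph_card_edge[OF U] uniform_hypergraph_edge_subset[OF U]
      by (auto intro: finite_subset)
    then show "card (permutations_of_set (e - {i})) = fact (k - 1)" using e by simp
  qed
  also have "\<dots> = degree E i * fact (k - 1)" by (simp add: Defs.degree_def)
  finally show ?thesis .
qed

lemma norm_prod_list_le:
  fixes x :: "'a \<Rightarrow> 'b :: real_normed_div_algebra"
  assumes "\<forall>j\<in>set xs. norm (x j) \<le> M"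
  shows "norm (prod_list (map x xs)) \<le> M ^ length xs"
  using assms
proof (induction xs)
  case (Cons a xs)
  have "0 \<le> M" using Cons.prems norm_ge_zero[of "x a"] by (meson list.set_intros(1) order_trans)
  have "norm (prod_list (map x (a # xs))) = norm (x a) * norm (prod_list (map x xs))"
    by (simp add: norm_mult)
  also have "\<dots> \<le> M * M ^ length xs"
    using Cons \<open>0 \<le> M\<close> by (intro mult_mono) auto
  finally show ?case by simp
qed simp

lemma norm_tensor_apply_adj_le:
  fixes M :: real
  assumes U: "uniform_hypergraph n k E" and k: "k \<ge> 2" and M0: "M \<ge> 0"
    and M: "\<And>j. adjacent E i j \<Longrightarrow> cmod (x j) \<le> M"
  shows "cmod (tensor_apply n k (adj_tensor k E) x i) \<le> real (degree E i) * M ^ (k - 1)"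
proof -
  let ?S = "{ys. length ys = k - 1 \<and> set ys \<subseteq> {..<n}}"
  let ?w = "M ^ (k - 1) / fact (k - 1)"
  have "cmod (tensor_apply n k (adj_tensor k E) x i)
      \<le> (\<Sum>ys\<in>?S. cmod (complex_of_real (adj_tensor k E (i # ys)) * prod_list (map x ys)))"
    unfolding tensor_apply_def by (rule norm_sum)
  also have "\<dots> \<le> (\<Sum>ys\<in>?S. if set (i # ys) \<in> E then ?w else 0)"
  proof (rule sum_mono)
    fix ys assume ys: "ys \<in> ?S"
    show "cmod (complex_of_real (adj_tensor k E (i # ys)) * prod_list (map x ys))
        \<le> (if set (i # ys) \<in> E then ?w else 0)"
    proof (cases "set (i # ys) \<in> E")
      case True
      then have "distinct (i # ys)" using distinct_if_edge[OF U] ys k by simp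
      then have "\<forall>j\<in>set ys. adjacent E i j" using True unfolding adjacent_def by auto
      then have "cmod (prod_list (map x ys)) \<le> M ^ (k - 1)"
        using norm_prod_list_le[of ys x M] M ys by fastforce
      then show ?thesis
        using True by (simp add: adj_tensor_def norm_mult norm_divide divide_right_mono)
    qed (simp add: adj_tensor_def)
  qed
  also have "\<dots> = (\<Sum>ys\<in>{ys\<in>?S. set (i # ys) \<in> E}. ?w)"
    by (rule sum.inter_filter[symmetric]) (simp add: finite_lists_length_subset)
  also have "\<dots> = card {ys\<in>?S. set (i # ys) \<in> E} * ?w"
    by simp
  also have "\<dots> \<le> (degree E i * fact (k - 1)) * ?w"
  proof (rule mult_right_mono)
    show "real (card {ys\<in>?S. set (i # ys) \<in> E}) \<le> real (degree E i * fact (k - 1))"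
      using card_edge_lists_le[OF U, of i] k unfolding of_nat_le_iff by simp
  qed (use M0 in simp)
  also have "\<dots> = degree E i * M ^ (k - 1)" by simp
  finally show ?thesis .
qed

lemma mult_le_mult_if_cross_bounded:
  fixes s t a b X Y :: real
  assumes sX: "s * X \<le> a * Y" and tY: "t * Y \<le> b * X" and X: "X > 0" and Y: "Y \<ge> 0"
    and "s \<ge> 0" "t \<ge> 0" "a \<ge> 0" "b \<ge> 0"
  shows "s * t \<le> a * b"
proof (cases "Y = 0")
  case True
  then have "s = 0" using sX X \<open>s \<ge> 0\<close> by (simp add: mult_le_0_iff)
  then show ?thesis using assms by simp
next
  case False
  have "(s * X) * (t * Y) \<le> (a * Y) * (b * X)"
    by (rule mult_mono) (use assms in auto)
  then have "(s * t) * (X * Y) \<le> (a * b) * (X * Y)"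
    by (simp add: ac_simps)
  then show ?thesis using X Y False by simp
qed

lemma norm_le_add_if_norm_diff_mult_le:
  fixes z c d :: "'a :: real_normed_vector"
  assumes "norm (z - c) * norm (z - d) \<le> norm c * norm d"
  shows "norm z \<le> norm c + norm d"
proof (rule ccontr)
  assume "\<not> ?thesis"
  then have "norm d < norm (z - c)" "norm c < norm (z - d)"
    using norm_triangle_sub[of z c] norm_triangle_sub[of z d] by (simp_all add: add.commute)
  then have "norm d * norm c < norm (z - c) * norm (z - d)"
    by (intro mult_strict_mono) auto
  then show False using assms by (simp add: mult.commute)
qed

lemma norm_eigenvalue_le_degree_add:
  assumes U: "uniform_hypergraph n k E" and k: "k \<ge> 2"
    and eig: "\<And>i. i < n \<Longrightarrow> tensor_apply n k (signless_laplacian_tensor k E) x i = lam * x i ^ (k - 1)"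
    and p: "p < n" "x p \<noteq> 0" "\<And>j. j < n \<Longrightarrow> cmod (x j) \<le> cmod (x p)"
    and q: "q < n" "\<And>j. adjacent E p j \<Longrightarrow> cmod (x j) \<le> cmod (x q)"
  shows "cmod lam \<le> real (degree E p + degree E q)"
proof -
  have row: "cmod (tensor_apply n k (adj_tensor k E) x i)
      = cmod (lam - of_nat (degree E i)) * cmod (x i) ^ (k - 1)" if "i < n" for i
  proof -
    have "tensor_apply n k (adj_tensor k E) x i = (lam - of_nat (degree E i)) * x i ^ (k - 1)"
      using eig[OF that] tensor_apply_signless_laplacian[OF that, of k E x]
      by (simp add: algebra_simps)
    then show ?thesis by (simp add: norm_mult norm_power)
  qed
  have at_p: "cmod (lam - of_nat (degree E p)) * cmod (x p) ^ (k - 1)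
      \<le> degree E p * cmod (x q) ^ (k - 1)"
  proof -
    have "cmod (tensor_apply n k (adj_tensor k E) x p) \<le> degree E p * cmod (x q) ^ (k - 1)"
      by (rule norm_tensor_apply_adj_le[OF U k norm_ge_zero]) (rule q(2))
    then show ?thesis using row[OF p(1)] by simp
  qed
  have at_q: "cmod (lam - of_nat (degree E q)) * cmod (x q) ^ (k - 1)
      \<le> degree E q * cmod (x p) ^ (k - 1)"
  proof -
    have "cmod (tensor_apply n k (adj_tensor k E) x q) \<le> degree E q * cmod (x p) ^ (k - 1)"
      by (rule norm_tensor_apply_adj_le[OF U k norm_ge_zero]) (rule p(3)[OF adjacent_less[OF U]])
    then show ?thesis using row[OF q(1)] by simp
  qed
  have "cmod (lam - of_nat (degree E p)) * cmod (lam - of_nat (degree E q))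
      \<le> real (degree E p) * real (degree E q)"
    by (rule mult_le_mult_if_cross_bounded[OF at_p at_q]) (use p(2) in auto)
  then show ?thesis
    using norm_le_add_if_norm_diff_mult_le[of lam "of_nat (degree E p)" "of_nat (degree E q)"]
    by simp
qed

lemma norm_eigenvalue_le_adjacent_degree_add:
  assumes U: "uniform_hypergraph n k E" and k: "k \<ge> 2" and "E \<noteq> {}"
    and "tensor_eigenvalue n k (signless_laplacian_tensor k E) lam"
  obtains i j where "adjacent E i j" "cmod lam \<le> real (degree E i + degree E j)"
proof -
  obtain x where nz: "\<exists>i<n. x i \<noteq> 0"
    and eig: "\<And>i. i < n \<Longrightarrow> tensor_apply n k (signless_laplacian_tensor k E) x i = lam * x i ^ (k - 1)"
    using assms(4) unfolding tensor_eigenvalue_def by blast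
  obtain p where p: "p < n" "\<And>j. j < n \<Longrightarrow> cmod (x j) \<le> cmod (x p)"
    using finite_obtains_max_point[of "{..<n}" "\<lambda>j. cmod (x j)"] nz by auto
  have "x p \<noteq> 0" using nz p(2) by force
  have bound: "cmod lam \<le> real (degree E p + degree E q)"
    if "q < n" "\<And>j. adjacent E p j \<Longrightarrow> cmod (x j) \<le> cmod (x q)" for q
    by (rule norm_eigenvalue_le_degree_add[OF U k, where x = x])
      (use eig p \<open>x p \<noteq> 0\<close> that in auto)
  show thesis
  proof (cases "\<exists>j. adjacent E p j")
    case True
    have "finite {j. adjacent E p j}"
      by (rule finite_subset[of _ "{..<n}"]) (auto dest: adjacent_less[OF U])
    then obtain q where q: "adjacent E p q" "\<And>j. adjacent E p j \<Longrightarrow> cmod (x j) \<le> cmod (x q)"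
      using finite_obtains_max_point[of "{j. adjacent E p j}" "\<lambda>j. cmod (x j)"] True by auto
    show thesis using that[OF q(1) bound[OF adjacent_less[OF U q(1)] q(2)]] .
  next
    case False
    \<comment> \<open>then \<open>p\<close> is isolated, so \<open>bound\<close> holds for every vertex \<open>q\<close>, in particular for one on an edge\<close>
    then have "degree E p = 0" using degree_eq_0_if_no_adjacent[OF U k] by blast
    obtain u v where uv: "adjacent E u v"
      using uniform_hypergraph_ex_adjacent[OF U k \<open>E \<noteq> {}\<close>] .
    have "u < n" using uv adjacent_less[OF U] adjacent_commute by metis
    then have "cmod lam \<le> real (degree E u)" using bound[of u] False \<open>degree E p = 0\<close> by auto
    then show thesis using that[OF uv] by simp
  qed
qed

lemma lists_length_Suc_0_eq: "{ys. length ys = Suc 0 \<and> set ys \<subseteq> A} = (\<lambda>j. [j]) ` A"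
  by (auto simp: length_Suc_conv)

lemma tensor_eigenvalue_exists_order_2:
  assumes "n > 0"
  shows "\<exists>lam. tensor_eigenvalue n 2 T lam"
proof -
  define M where "M = mat n n (\<lambda>(i, j). complex_of_real (T [i, j]))"
  have M: "M \<in> carrier_mat n n" unfolding M_def by simp
  obtain lam where "lam \<in> spectrum M" using spectrum_non_empty[OF M assms] by blast
  then obtain v where v: "v \<in> carrier_vec n" "v \<noteq> 0\<^sub>v n" "M *\<^sub>v v = lam \<cdot>\<^sub>v v"
    using M unfolding spectrum_def eigenvalue_def eigenvector_def by auto
  define x where "x i = (if i < n then v $ i else 0)" for i
  have "\<exists>i<n. x i \<noteq> 0"
  proof (rule ccontr)
    assume "\<not> (\<exists>i<n. x i \<noteq> 0)"
    then have "v = 0\<^sub>v n" using v(1) unfolding x_def by (intro eq_vecI) auto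
    then show False using v(2) by simp
  qed
  moreover have "tensor_apply n 2 T x i = lam * x i ^ (2 - 1)" if "i < n" for i
  proof -
    have "tensor_apply n 2 T x i = (\<Sum>j<n. complex_of_real (T [i, j]) * x j)"
      unfolding tensor_apply_def by (simp add: lists_length_Suc_0_eq sum.reindex inj_on_def)
    also have "\<dots> = (M *\<^sub>v v) $ i"
      using that v(1) unfolding M_def x_def by (simp add: scalar_prod_def lessThan_atLeast0)
    also have "\<dots> = lam * x i ^ (2 - 1)" using v that unfolding x_def by simp
    finally show ?thesis .
  qed
  ultimately show ?thesis unfolding tensor_eigenvalue_def by blast
qed

text \<open>For \<open>k \<ge> 3\<close> a product of \<open>k - 1\<close> coordinates of a unit vector can only be nonzero on
  index lists spanning at most two vertices, which never form an edge.\<close>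

lemma tensor_eigenvalue_signless_laplacian_unit_vector:
  assumes U: "uniform_hypergraph n k E" and k: "k \<ge> 3" and v: "v < n"
  shows "tensor_eigenvalue n k (signless_laplacian_tensor k E) (of_nat (degree E v))"
proof -
  define x where "x i = (if i = v then (1::complex) else 0)" for i
  have "tensor_apply n k (adj_tensor k E) x i = 0" for i
    unfolding tensor_apply_def
  proof (rule sum.neutral, rule ballI)
    fix ys assume "ys \<in> {ys. length ys = k - 1 \<and> set ys \<subseteq> {..<n}}"
    show "complex_of_real (adj_tensor k E (i # ys)) * prod_list (map x ys) = 0"
    proof (cases "set (i # ys) \<in> E")
      case True
      have "card (set (i # ys)) \<le> card {i, v}"
        if "prod_list (map x ys) \<noteq> 0"
        using that by (intro card_mono) (auto simp: x_def split: if_splits)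
      moreover have "card {i, v} \<le> 2" by (simp add: card_insert_if)
      ultimately show ?thesis
        using True k uniform_hypergraph_card_edge[OF U True] by fastforce
    qed (simp add: adj_tensor_def)
  qed
  then have "tensor_apply n k (signless_laplacian_tensor k E) x i = of_nat (degree E v) * x i ^ (k - 1)"
    if "i < n" for i
    using tensor_apply_signless_laplacian[OF that, of k E x] k unfolding x_def by auto
  moreover have "\<exists>i<n. x i \<noteq> 0" using v unfolding x_def by auto
  ultimately show ?thesis unfolding tensor_eigenvalue_def by blast
qed

theorem corollary2p2:
  fixes n k :: nat and E :: "nat set set"
  assumes "uniform_hypergraph n k E" and "k \<ge> 2" and "E \<noteq> {}"
  shows "tensor_spectral_radius n k (signless_laplacian_tensor k E)
           \<le> Max {real (degree E i + degree E j) | e i j. e \<in> E \<and> i \<in> e \<and> j \<in> e \<and> i \<noteq> j}"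
proof -
  let ?D = "{real (degree E i + degree E j) | e i j. e \<in> E \<and> i \<in> e \<and> j \<in> e \<and> i \<noteq> j}"
  have D_eq: "?D = (\<lambda>(i, j). real (degree E i + degree E j)) ` {(i, j). adjacent E i j}"
    unfolding adjacent_def by fastforce
  have "finite {(i, j). adjacent E i j}"
    by (rule finite_subset[of _ "{..<n} \<times> {..<n}"])
      (auto dest: uniform_hypergraph_edge_subset[OF assms(1)] simp: adjacent_def)
  then have "finite ?D" unfolding D_eq by simp
  have bound: "cmod lam \<le> Max ?D"
    if ev: "tensor_eigenvalue n k (signless_laplacian_tensor k E) lam" for lam
  proof -
    obtain i j where ij: "adjacent E i j" "cmod lam \<le> real (degree E i + degree E j)"
      using norm_eigenvalue_le_adjacent_degree_add[OF assms ev] .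
    then have "real (degree E i + degree E j) \<in> ?D" unfolding adjacent_def by blast
    from Max_ge[OF \<open>finite ?D\<close> this] show ?thesis using ij(2) by linarith
  qed
  obtain i j where "adjacent E i j" using uniform_hypergraph_ex_adjacent[OF assms] .
  then have "0 < n" using adjacent_less[OF assms(1)] by (metis gr0I not_less0)
  then have "\<exists>lam. tensor_eigenvalue n k (signless_laplacian_tensor k E) lam"
    using tensor_eigenvalue_exists_order_2 tensor_eigenvalue_signless_laplacian_unit_vector[OF assms(1)]
      \<open>k \<ge> 2\<close> by (cases "k = 2") auto
  then show ?thesis
    unfolding tensor_spectral_radius_def using bound by (intro cSup_least) auto
qed

end
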